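(* Let $N\ge3$, $\beta>-2$, $k_\infty>0$ and $p>p_S(\beta)$. There exists a unique $\bar v\in C^2(0,\infty)$ solving $$\bar v''+\frac{N-1}{r}\bar v'+k_\infty r^{\beta}\max\{\bar v,0\}^p=0\ \ (r>0),\qquad \lim_{r\to\infty}r^{N-2}\bar v(r)=1.$$ Moreover, $\bar r:=\sup\{r>0:\bar v(r)=0\}$ satisfies $0<\bar r<\infty$.
   Context: $p_S(\beta):=\frac{N+2+2\beta}{N-2}$. *)

theory Defs
  imports "HOL-Analysis.Analysis"
begin

definition p_S :: "nat \<Rightarrow> real \<Rightarrow> real" where
  "p_S N \<beta> = (real N + 2 + 2 * \<beta>) / (real N - 2)"

definition C2_on :: "real set \<Rightarrow> (real \<Rightarrow> real) \<Rightarrow> bool" where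
  "C2_on S v \<longleftrightarrow> (\<forall>r\<in>S. v differentiable (at r)) \<and>
                   (\<forall>r\<in>S. deriv v differentiable (at r)) \<and>
                   continuous_on S (deriv (deriv v))"

definition radial_sol :: "nat \<Rightarrow> real \<Rightarrow> real \<Rightarrow> real \<Rightarrow> (real \<Rightarrow> real) \<Rightarrow> bool" where
  "radial_sol N \<beta> k p v \<longleftrightarrow>
     C2_on {0<..} v \<and>
     (\<forall>r>0. deriv (deriv v) r + (real N - 1) / r * deriv v r
             + k * r powr \<beta> * (max (v r) 0) powr p = 0) \<and>
     ((\<lambda>r. r ^ (N - 2) * v r) \<longlongrightarrow> 1) at_top"

end

theory Submission
  imports Defs
begin

text \<open>
  With \<open>a = (N - 2) p - N - \<beta>\<close>, \<open>m = (N - 2) / a\<close> and \<open>K = k / a\<^sup>2\<close>, the substitution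
  \<open>s = r\<^sup>-\<^sup>a\<close>, \<open>X(s) = r\<^sup>N\<^sup>-\<^sup>2 v(r)\<close> turns the problem into \<open>(s\<^sup>m\<^sup>+\<^sup>1 X')' = -K s\<^sup>m X\<^sub>+\<^sup>p\<close>,
  \<open>X(0) = 1\<close>, i.e. into the Volterra equation
  \<open>X(s) = 1 - (K/m) \<integral>\<^sub>0\<^sup>s (1 - (t/s)\<^sup>m) X\<^sub>+(t)\<^sup>p dt\<close>.
  Picard iteration (with the nonlinearity truncated so that it is Lipschitz) produces a solution
  \<open>W \<le> 1\<close>, and a Gronwall argument shows that it is the only one; hence \<open>v = r\<^sup>2\<^sup>-\<^sup>N W(r\<^sup>-\<^sup>a)\<close>.

  \<open>W\<close> is nonincreasing and positive near 0, so the zeros of \<open>v\<close> are bounded. To see that \<open>W\<close> has a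
  zero, suppose it stays positive. Then \<open>W(s)\<^sup>p\<^sup>-\<^sup>1 \<le> C/s\<close>, and the Pohozaev-type function
  \<open>P(s) = K\<^sup>2 G\<^sup>2 s\<^sup>-\<^sup>m/2 + K s\<^sup>m\<^sup>+\<^sup>1 W\<^sup>p\<^sup>+\<^sup>1/(p+1) - m K W G/2\<close>, where \<open>G(s) = \<integral>\<^sub>0\<^sup>s t\<^sup>m W\<^sup>p\<close>,
  has derivative \<open>((m+1)/(p+1) - m/2) K s\<^sup>m W\<^sup>p\<^sup>+\<^sup>1\<close>. Both the positivity of this coefficient and the
  bound \<open>P(\<xi>) \<le> C' R\<^sup>m\<^sup>-\<^sup>2\<^sup>/\<^sup>(\<^sup>p\<^sup>-\<^sup>1\<^sup>)\<close> for some \<open>\<xi> \<in> (R, 2R)\<close> follow from \<open>m (p - 1) < 2\<close>, which is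
  \<open>p > p_S N \<beta>\<close>. So \<open>P\<close> would be increasing and positive, yet arbitrarily small far out.
\<close>

section \<open>Integrals of powers and Volterra kernels\<close>

lemma continuous_on_atLeastAtMost_if_atLeast:
  fixes h :: "real \<Rightarrow> real"
  shows "continuous_on {a..} h \<Longrightarrow> continuous_on {a..b} h"
  by (rule continuous_on_subset) auto

lemma continuous_on_atLeast_if_atLeastAtMost:
  fixes f :: "real \<Rightarrow> real"
  assumes "\<And>b. b > a \<Longrightarrow> continuous_on {a..b} f"
  shows "continuous_on {a..} f"
  unfolding continuous_on_eq_continuous_within
proof
  fix x :: real assume x: "x \<in> {a..}"
  have "continuous (at x within {a..x+1}) f"
    using assms[of "x+1"] x by (auto simp: continuous_on_eq_continuous_within)
  moreover have "at x within {a..x+1} = at x within {a..}"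
    by (rule at_within_nhd[of _ "{..<x+1}"]) auto
  ultimately show "continuous (at x within {a..}) f" by simp
qed

lemma continuous_on_powr_right:
  "m > 0 \<Longrightarrow> S \<subseteq> {0..} \<Longrightarrow> continuous_on S (\<lambda>t::real. t powr m)"
  using continuous_on_powr'[OF continuous_on_id continuous_on_const, of S m] by force

lemma integral_atLeastAtMost_has_real_derivative:
  fixes f :: "real \<Rightarrow> real"
  assumes "continuous_on {a..} f" "s > a"
  shows "((\<lambda>u. integral {a..u} f) has_real_derivative f s) (at s)"
proof -
  have "((\<lambda>u. integral {a..u} f) has_real_derivative f s) (at s within {a..s+1})"
    using assms by (intro integral_has_real_derivative continuous_on_atLeastAtMost_if_atLeast) auto
  moreover have "at s within {a..s+1} = at s"
    using assms by (intro at_within_interior) auto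
  ultimately show ?thesis by simp
qed

lemma has_integral_powr:
  fixes m s :: real
  assumes "m > 0" "s \<ge> 0"
  shows "((\<lambda>t. t powr m) has_integral s powr (m+1) / (m+1)) {0..s}"
proof -
  have "((\<lambda>t. t powr m) has_integral (s powr (m+1) / (m+1) - 0 powr (m+1) / (m+1))) {0..s}"
  proof (rule fundamental_theorem_of_calculus_interior[OF assms(2)])
    show "continuous_on {0..s} (\<lambda>t. t powr (m+1) / (m+1))"
      using assms by (intro continuous_intros continuous_on_powr_right) auto
    fix t assume "t \<in> {0<..<s}"
    then have "((\<lambda>t. t powr (m+1) / (m+1)) has_real_derivative ((m+1) * t powr (m+1-1)) / (m+1)) (at t)"
      by (intro DERIV_cdivide has_real_derivative_powr) auto
    then show "((\<lambda>t. t powr (m+1) / (m+1)) has_vector_derivative t powr m) (at t)"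
      using assms by (simp add: has_real_derivative_iff_has_vector_derivative)
  qed
  then show ?thesis using assms by simp
qed

lemma filterlim_powr_neg_at_right_0:
  fixes e :: real
  assumes "e > 0"
  shows "filterlim (\<lambda>s. s powr (-e)) at_top (at_right 0)"
proof -
  have pos: "\<forall>\<^sub>F s in at_right (0::real). s > 0" by (simp add: eventually_at_filter)
  have "((\<lambda>s. s powr e) \<longlongrightarrow> 0) (at_right (0::real))"
    by (rule tendsto_zero_powrI) (use assms pos in \<open>auto intro!: tendsto_intros elim: eventually_mono\<close>)
  moreover have "\<forall>\<^sub>F s in at_right (0::real). s powr e > 0"
    using pos by eventually_elim auto
  ultimately have "filterlim (\<lambda>s. s powr e) (at_right 0) (at_right (0::real))"
    by (rule tendsto_imp_filterlim_at_right)
  from filterlim_compose[OF filterlim_inverse_at_top_right this]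
  show ?thesis by (simp add: powr_minus)
qed

lemma powr_coefficient_eq_0_if_tendsto:
  fixes e c d l :: real
  assumes "e > 0" and F: "(F \<longlongrightarrow> l) (at_right 0)" and eq: "\<And>s. s > 0 \<Longrightarrow> F s + c * s powr (-e) = d"
  shows "c = 0"
proof (rule ccontr)
  assume "c \<noteq> 0"
  have "((\<lambda>s. (d - F s) / c) \<longlongrightarrow> (d - l) / c) (at_right 0)"
    by (intro tendsto_intros F) fact
  moreover have "\<forall>\<^sub>F s in at_right 0. (d - F s) / c = s powr (-e)"
    using eq \<open>c \<noteq> 0\<close> by (auto simp: eventually_at_filter field_simps)
  ultimately have "((\<lambda>s. s powr (-e)) \<longlongrightarrow> (d - l) / c) (at_right 0)"
    by (rule Lim_transform_eventually)
  moreover have "filterlim (\<lambda>s. s powr (-e)) at_infinity (at_right 0)"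
    by (rule filterlim_at_top_imp_at_infinity filterlim_powr_neg_at_right_0 assms(1))+
  ultimately show False
    by (rule not_tendsto_and_filterlim_at_infinity[rotated]) simp
qed

definition kernel_integral :: "real \<Rightarrow> (real \<Rightarrow> real) \<Rightarrow> real \<Rightarrow> real" where
  "kernel_integral m h s = integral {0..s} (\<lambda>t. (1 - (t/s) powr m) * h t)"

definition moment_integral :: "real \<Rightarrow> (real \<Rightarrow> real) \<Rightarrow> real \<Rightarrow> real" where
  "moment_integral m h s = integral {0..s} (\<lambda>t. t powr m * h t)"

lemma kernel_weight_bounds:
  fixes m s t :: real
  assumes "m > 0" "0 \<le> t" "t \<le> s"
  shows "0 \<le> 1 - (t/s) powr m" "1 - (t/s) powr m \<le> 1"
proof -
  have "(t/s) powr m \<le> 1" by (rule powr_le1) (use assms in \<open>auto simp: divide_le_eq_1\<close>)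
  then show "0 \<le> 1 - (t/s) powr m" by simp
  show "1 - (t/s) powr m \<le> 1" by simp
qed

lemma continuous_on_kernel_weight:
  fixes m s :: real and h :: "real \<Rightarrow> real"
  assumes "m > 0" "s > 0" "continuous_on {0..s} h"
  shows "continuous_on {0..s} (\<lambda>t. (1 - (t/s) powr m) * h t)"
proof -
  have "continuous_on {0..s} (\<lambda>t. (t/s) powr m)"
    by (rule continuous_on_powr') (use assms in \<open>auto intro!: continuous_intros\<close>)
  then show ?thesis by (intro continuous_on_mult continuous_on_diff continuous_on_const assms(3))
qed

lemma kernel_integral_eq:
  assumes "m > 0" "s > 0" "continuous_on {0..} h"
  shows "kernel_integral m h s = integral {0..s} h - s powr (-m) * moment_integral m h s"
proof -
  have h: "continuous_on {0..s} h"
    using assms continuous_on_atLeastAtMost_if_atLeast by blast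
  have "kernel_integral m h s = integral {0..s} (\<lambda>t. h t - s powr (-m) * (t powr m * h t))"
    unfolding kernel_integral_def
    by (rule integral_cong) (use assms in \<open>auto simp: powr_divide powr_minus field_simps\<close>)
  also have "\<dots> = integral {0..s} h - s powr (-m) * moment_integral m h s"
    unfolding moment_integral_def using assms h
    by (subst integral_diff)
       (auto intro!: integrable_continuous_interval continuous_on_mult continuous_on_const
         continuous_on_powr_right)
  finally show ?thesis .
qed

lemma moment_integral_has_derivative:
  assumes "m > 0" "s > 0" "continuous_on {0..} h"
  shows "(moment_integral m h has_real_derivative s powr m * h s) (at s)"
  unfolding moment_integral_def[abs_def] using assms
  by (intro integral_atLeastAtMost_has_real_derivative continuous_intros continuous_on_powr_right)
     auto

lemma kernel_integral_has_derivative: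
  assumes "m > 0" "s > 0" "continuous_on {0..} h"
  shows "(kernel_integral m h has_real_derivative m * s powr (-m-1) * moment_integral m h s) (at s)"
proof -
  have "((\<lambda>s. integral {0..s} h - s powr (-m) * moment_integral m h s) has_real_derivative
       m * s powr (-m-1) * moment_integral m h s) (at s)"
    using assms
    by (auto intro!: derivative_eq_intros integral_atLeastAtMost_has_real_derivative
        moment_integral_has_derivative simp: powr_minus powr_diff field_simps)
  then show ?thesis
    by (rule has_field_derivative_transform_within_open[of _ _ _ "{0<..}"])
       (use assms in \<open>auto simp: kernel_integral_eq\<close>)
qed

lemma kernel_integral_diff_le:
  assumes "m > 0" "s \<ge> 0" "continuous_on {0..} h1" "continuous_on {0..} h2"
  shows "\<bar>kernel_integral m h1 s - kernel_integral m h2 s\<bar> \<le> integral {0..s} (\<lambda>t. \<bar>h1 t - h2 t\<bar>)"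
proof (cases "s = 0")
  case True then show ?thesis by (simp add: kernel_integral_def)
next
  case False
  then have s: "s > 0" using assms by auto
  have h: "continuous_on {0..s} h1" "continuous_on {0..s} h2"
    using assms continuous_on_atLeastAtMost_if_atLeast by blast+
  let ?w = "\<lambda>t. 1 - (t/s) powr m"
  have "kernel_integral m h1 s - kernel_integral m h2 s = integral {0..s} (\<lambda>t. ?w t * h1 t - ?w t * h2 t)"
    unfolding kernel_integral_def
    by (rule integral_diff[symmetric])
       (auto intro!: integrable_continuous_interval continuous_on_kernel_weight assms s h)
  also have "norm \<dots> \<le> integral {0..s} (\<lambda>t. \<bar>h1 t - h2 t\<bar>)"
  proof (rule integral_norm_bound_integral)
    show "(\<lambda>t. ?w t * h1 t - ?w t * h2 t) integrable_on {0..s}"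
      by (intro integrable_continuous_interval continuous_on_diff continuous_on_kernel_weight assms s h)
    show "(\<lambda>t. \<bar>h1 t - h2 t\<bar>) integrable_on {0..s}"
      by (auto intro!: integrable_continuous_interval h continuous_intros)
    fix t assume "t \<in> {0..s}"
    then have "0 \<le> ?w t" "?w t \<le> 1" using kernel_weight_bounds[of m t s] assms by auto
    then show "norm (?w t * h1 t - ?w t * h2 t) \<le> \<bar>h1 t - h2 t\<bar>"
      by (simp add: abs_mult mult_left_le_one_le flip: right_diff_distrib)
  qed
  finally show ?thesis by simp
qed

lemma kernel_integral_nonneg:
  assumes "m > 0" "s \<ge> 0" "continuous_on {0..} h" "\<And>t. t \<ge> 0 \<Longrightarrow> h t \<ge> 0"
  shows "kernel_integral m h s \<ge> 0"
proof (cases "s = 0")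
  case True then show ?thesis by (simp add: kernel_integral_def)
next
  case False
  then have s: "s > 0" using assms by auto
  show ?thesis unfolding kernel_integral_def
    by (rule integral_nonneg)
       (auto intro!: integrable_continuous_interval continuous_on_kernel_weight assms s
         continuous_on_atLeastAtMost_if_atLeast[OF assms(3)] mult_nonneg_nonneg kernel_weight_bounds)
qed

lemma kernel_integral_cong:
  "(\<And>t. t \<ge> 0 \<Longrightarrow> h1 t = h2 t) \<Longrightarrow> kernel_integral m h1 s = kernel_integral m h2 s"
  unfolding kernel_integral_def by (rule integral_cong) auto

lemma continuous_on_kernel_integral:
  assumes "m > 0" "continuous_on {0..} h"
  shows "continuous_on {0..} (kernel_integral m h)"
proof -
  obtain B where B: "\<And>x. x \<in> {0..1} \<Longrightarrow> norm (h x) \<le> B"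
    using continuous_on_compact_bound[OF compact_Icc continuous_on_atLeastAtMost_if_atLeast[OF assms(2)]]
    by blast
  have "(kernel_integral m h \<longlongrightarrow> 0) (at_right 0)"
  proof (rule Lim_null_comparison)
    show "((\<lambda>s. B * s) \<longlongrightarrow> 0) (at_right 0)"
      by (rule tendsto_eq_intros) auto
    have "\<forall>\<^sub>F s in at_right (0::real). s \<in> {0<..<1}"
      by (rule eventually_at_right_real) simp
    then show "\<forall>\<^sub>F s in at_right 0. norm (kernel_integral m h s) \<le> B * s"
    proof eventually_elim
      case (elim s)
      have "\<bar>kernel_integral m h s - kernel_integral m (\<lambda>_. 0) s\<bar> \<le> integral {0..s} (\<lambda>t. \<bar>h t - 0\<bar>)"
        using elim assms by (intro kernel_integral_diff_le) auto
      also have "\<dots> \<le> integral {0..s} (\<lambda>t. B)"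
        using elim B assms
        by (intro integral_le)
           (auto intro!: integrable_continuous_interval continuous_intros
             continuous_on_atLeastAtMost_if_atLeast)
      finally show ?case using elim by (simp add: kernel_integral_def mult.commute)
    qed
  qed
  then have "continuous (at 0 within {0..}) (kernel_integral m h)"
    by (simp add: continuous_within at_within_Ici_at_right kernel_integral_def)
  moreover have "isCont (kernel_integral m h) s" if "s > 0" for s
    using kernel_integral_has_derivative[OF assms(1) that assms(2)] by (rule DERIV_isCont)
  ultimately show ?thesis
    unfolding continuous_on_eq_continuous_within
    by (auto simp: order_le_less continuous_at_imp_continuous_at_within)
qed

section \<open>An iterated integral inequality and a truncated power\<close>

lemma has_integral_scaled_power:
  fixes B M s :: real
  assumes "s \<ge> 0"
  shows "((\<lambda>t. B * (M*t)^n / fact n) has_integral B * (M^n * s^(Suc n)) / fact (Suc n)) {0..s}"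
proof -
  have "((\<lambda>t. (B * M^n / fact (Suc n)) * t^(Suc n)) has_real_derivative B * (M*t)^n / fact n)
      (at t within {0..s})" for t
  proof -
    have "((\<lambda>t. (B * M^n / fact (Suc n)) * t^(Suc n)) has_real_derivative
        (B * M^n / fact (Suc n)) * (real (Suc n) * t^n)) (at t)"
      using DERIV_pow[of "Suc n" t] by (intro DERIV_cmult) simp
    moreover have "(B * M^n / fact (Suc n)) * (real (Suc n) * t^n) = B * (M*t)^n / fact n"
      by (simp add: power_mult_distrib del: of_nat_Suc)
    ultimately show ?thesis by (auto intro: has_field_derivative_at_within)
  qed
  then have "((\<lambda>t. B * (M*t)^n / fact n) has_integral
      (B * M^n / fact (Suc n)) * s^(Suc n) - (B * M^n / fact (Suc n)) * 0^(Suc n)) {0..s}"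
    using assms
    by (intro fundamental_theorem_of_calculus)
       (auto simp: has_real_derivative_iff_has_vector_derivative)
  then show ?thesis by (simp add: field_simps)
qed

lemma iterated_integral_inequality:
  fixes d :: "nat \<Rightarrow> real \<Rightarrow> real"
  assumes cont: "\<And>n. continuous_on {0..T} (d n)"
    and d0: "\<And>s. s \<in> {0..T} \<Longrightarrow> d 0 s \<le> B"
    and dSuc: "\<And>n s. s \<in> {0..T} \<Longrightarrow> d (Suc n) s \<le> M * integral {0..s} (d n)"
    and M: "M \<ge> 0"
  shows "s \<in> {0..T} \<Longrightarrow> d n s \<le> B * (M * s)^n / fact n"
proof (induction n arbitrary: s)
  case 0 then show ?case using d0 by simp
next
  case (Suc n)
  have sub: "{0..s} \<subseteq> {0..T}" using Suc.prems by auto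
  have "d (Suc n) s \<le> M * integral {0..s} (d n)" using dSuc Suc.prems by blast
  also have "\<dots> \<le> M * integral {0..s} (\<lambda>t. B * (M*t)^n / fact n)"
  proof (intro mult_left_mono integral_le M)
    show "d n integrable_on {0..s}"
      by (rule integrable_continuous_interval, rule continuous_on_subset[OF cont sub])
    show "(\<lambda>t. B * (M*t)^n / fact n) integrable_on {0..s}"
      using has_integral_scaled_power[of s B M n] Suc.prems by auto
    show "d n t \<le> B * (M*t)^n / fact n" if "t \<in> {0..s}" for t
      using Suc.IH sub that by blast
  qed
  also have "integral {0..s} (\<lambda>t. B * (M*t)^n / fact n) = B * (M^n * s^(Suc n)) / fact (Suc n)"
    using Suc.prems by (intro integral_unique has_integral_scaled_power) auto
  also have "M * (B * (M^n * s^(Suc n)) / fact (Suc n)) = B * (M * s)^(Suc n) / fact (Suc n)"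
    by (simp add: power_mult_distrib)
  finally show ?case .
qed

lemma integral_inequality_imp_nonpos:
  fixes d :: "real \<Rightarrow> real"
  assumes cont: "continuous_on {0..T} d"
    and ineq: "\<And>s. s \<in> {0..T} \<Longrightarrow> d s \<le> M * integral {0..s} d"
    and M: "M \<ge> 0" and s: "s \<in> {0..T}"
  shows "d s \<le> 0"
proof -
  obtain B where B: "\<And>t. t \<in> {0..T} \<Longrightarrow> norm (d t) \<le> B"
    using continuous_on_compact_bound[OF compact_Icc cont] by blast
  have "d s \<le> B * (M * s)^n / fact n" for n
    by (rule iterated_integral_inequality[where d = "\<lambda>_. d", OF cont _ ineq M s]) (use B in force)
  moreover have "(\<lambda>n. B * (inverse (fact n) * (M * s)^n)) \<longlonglongrightarrow> B * 0"
    by (intro tendsto_mult tendsto_const summable_LIMSEQ_zero summable_exp)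
  then have "(\<lambda>n. B * (M * s)^n / fact n) \<longlonglongrightarrow> 0"
    by (simp add: divide_inverse mult_ac)
  ultimately show ?thesis by (intro LIMSEQ_le_const[where X = "\<lambda>n. B * (M * s)^n / fact n"]) auto
qed

lemma powr_diff_le_unit_interval:
  fixes p x y :: real
  assumes "p \<ge> 1" "0 \<le> y" "y \<le> x" "x \<le> 1"
  shows "x powr p - y powr p \<le> p * (x - y)"
proof (cases "y = x")
  case True then show ?thesis by simp
next
  case False
  then have yx: "y < x" using assms by auto
  have "continuous_on {y..x} (\<lambda>t. t powr p)"
    by (rule continuous_on_powr_right) (use assms in auto)
  moreover have "(\<lambda>t. t powr p) differentiable (at z)" if "y < z" for z
    using has_real_derivative_powr[of z p] that assms by (auto simp: real_differentiable_def)
  ultimately obtain l z where z: "y < z" "z < x"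
    "((\<lambda>t. t powr p) has_real_derivative l) (at z)" "x powr p - y powr p = (x - y) * l"
    using MVT[OF yx] by blast
  have "l = p * z powr (p - 1)"
    using DERIV_unique[OF z(3) has_real_derivative_powr[of z p]] z assms by auto
  moreover have "z powr (p - 1) \<le> 1" by (rule powr_le1) (use z assms in auto)
  ultimately have "l \<le> p" using assms by (simp add: mult_left_le_one_le)
  then show ?thesis using z yx by (simp add: mult.commute mult_left_mono)
qed

definition trunc_powr :: "real \<Rightarrow> real \<Rightarrow> real" where
  "trunc_powr p x = min (max x 0) 1 powr p"

lemma trunc_powr_nonneg: "trunc_powr p x \<ge> 0"
  by (simp add: trunc_powr_def)

lemma trunc_powr_le_1: "p \<ge> 0 \<Longrightarrow> trunc_powr p x \<le> 1"
  unfolding trunc_powr_def by (rule powr_le1) auto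

lemma trunc_powr_eq: "x \<le> 1 \<Longrightarrow> trunc_powr p x = max x 0 powr p"
  by (simp add: trunc_powr_def)

lemma continuous_on_trunc_powr:
  assumes "p > 0" "continuous_on S f"
  shows "continuous_on S (\<lambda>x. trunc_powr p (f x))"
  unfolding trunc_powr_def
  by (rule continuous_on_powr') (use assms in \<open>auto intro!: continuous_intros\<close>)

lemma trunc_powr_lipschitz:
  assumes "p \<ge> 1"
  shows "\<bar>trunc_powr p x - trunc_powr p y\<bar> \<le> p * \<bar>x - y\<bar>"
proof -
  define c where "c z = min (max z 0) (1::real)" for z
  have c: "0 \<le> c z" "c z \<le> 1" "\<bar>c x - c y\<bar> \<le> \<bar>x - y\<bar>" for z by (auto simp: c_def)
  have key: "\<bar>c u powr p - c v powr p\<bar> \<le> p * \<bar>c u - c v\<bar>" if "c v \<le> c u" for u v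
  proof -
    have "c v powr p \<le> c u powr p" by (rule powr_mono2) (use assms c that in auto)
    moreover have "c u powr p - c v powr p \<le> p * (c u - c v)"
      by (rule powr_diff_le_unit_interval) (use assms c that in auto)
    ultimately show ?thesis using that by simp
  qed
  have "\<bar>c x powr p - c y powr p\<bar> \<le> p * \<bar>c x - c y\<bar>"
    using key[of y x] key[of x y] by (cases "c y \<le> c x") (auto simp: abs_minus_commute)
  also have "\<dots> \<le> p * \<bar>x - y\<bar>" using c(3) assms by (intro mult_left_mono) auto
  finally show ?thesis by (simp add: trunc_powr_def c_def)
qed

section \<open>The integral equation\<close>

locale radial_problem =
  fixes N :: nat and \<beta> k p :: real
  assumes N_ge_3: "N \<ge> 3" and beta_gt: "\<beta> > -2" and k_pos: "k > 0"
    and p_gt_p_S: "p > p_S N \<beta>"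
begin

definition "a = (real N - 2) * p - real N - \<beta>"
definition "m = (real N - 2) / a"
definition "K = k / a^2"
definition pos_powr :: "real \<Rightarrow> real" where "pos_powr x = max x 0 powr p"

lemma p_S_ineq: "(real N - 2) * p > real N + 2 + 2 * \<beta>"
proof -
  have "real N - 2 > 0" using N_ge_3 by auto
  then show ?thesis using p_gt_p_S by (simp add: p_S_def divide_less_eq mult.commute)
qed

lemma a_pos: "a > 0"
  using p_S_ineq beta_gt by (simp add: a_def)

lemma m_pos: "m > 0"
  using a_pos N_ge_3 by (simp add: m_def)

lemma K_pos: "K > 0"
  using a_pos k_pos by (simp add: K_def)

lemma p_gt_1: "p > 1"
proof -
  have "(real N - 2) * p > (real N - 2) * 1" using p_S_ineq beta_gt by simp
  then show ?thesis using N_ge_3 by simp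
qed

lemma a_mult_m: "a * m = real N - 2"
  using a_pos by (simp add: m_def)

lemma a_sq_mult_K: "a^2 * K = k"
  using a_pos by (simp add: K_def)

text \<open>The hypothesis \<open>p > p_S N \<beta>\<close> is equivalent to \<open>m (p - 1) < 2\<close>.\<close>

lemma m_mult_p_minus_1_lt_2: "m * (p - 1) < 2"
proof -
  have "(real N - 2) * (p - 1) < 2 * a" using p_S_ineq by (simp add: a_def algebra_simps)
  then show ?thesis using a_pos by (simp add: m_def field_simps)
qed

lemma pos_powr_nonneg: "pos_powr x \<ge> 0"
  by (simp add: pos_powr_def)

lemma pos_powr_mono: "x \<le> y \<Longrightarrow> pos_powr x \<le> pos_powr y"
  unfolding pos_powr_def by (rule powr_mono2) (use p_gt_1 in auto)

lemma pos_powr_mult: "c > 0 \<Longrightarrow> pos_powr (c * x) = c powr p * pos_powr x"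
proof -
  assume c: "c > 0"
  then have "max (c * x) 0 = c * max x 0" by (auto simp: max_def mult_le_0_iff)
  then show ?thesis using c by (simp add: pos_powr_def powr_mult)
qed

lemma continuous_on_pos_powr: "continuous_on S f \<Longrightarrow> continuous_on S (\<lambda>x. pos_powr (f x))"
  unfolding pos_powr_def
  by (rule continuous_on_powr') (use p_gt_1 in \<open>auto intro!: continuous_intros\<close>)

text \<open>Integrating \<open>(s\<^sup>m\<^sup>+\<^sup>1 X')' = -K s\<^sup>m X\<^sub>+\<^sup>p\<close> twice with \<open>X(0) = 1\<close>:\<close>

definition integral_solution :: "(real \<Rightarrow> real) \<Rightarrow> bool" where
  "integral_solution X \<longleftrightarrow> continuous_on {0..} X \<and>
     (\<forall>s\<ge>0. X s = 1 - (K/m) * kernel_integral m (\<lambda>t. pos_powr (X t)) s)"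

definition moment :: "(real \<Rightarrow> real) \<Rightarrow> real \<Rightarrow> real" where
  "moment X = moment_integral m (\<lambda>t. pos_powr (X t))"

lemma integral_solution_0: "integral_solution X \<Longrightarrow> X 0 = 1"
  by (simp add: integral_solution_def kernel_integral_def)

lemma integral_solution_le_1:
  assumes "integral_solution X" "s \<ge> 0"
  shows "X s \<le> 1"
proof -
  have "kernel_integral m (\<lambda>t. pos_powr (X t)) s \<ge> 0"
    using assms m_pos
    by (intro kernel_integral_nonneg continuous_on_pos_powr)
       (auto simp: integral_solution_def pos_powr_nonneg)
  then show ?thesis using assms K_pos m_pos by (auto simp: integral_solution_def)
qed

lemma moment_has_derivative:
  assumes "continuous_on {0..} X" "s > 0"
  shows "(moment X has_real_derivative s powr m * pos_powr (X s)) (at s)"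
  unfolding moment_def
  by (rule moment_integral_has_derivative[OF m_pos assms(2) continuous_on_pos_powr[OF assms(1)]])

lemma moment_nonneg: "s \<ge> 0 \<Longrightarrow> continuous_on {0..} X \<Longrightarrow> moment X s \<ge> 0"
  unfolding moment_def moment_integral_def
  by (rule integral_nonneg)
     (auto intro!: integrable_continuous_interval continuous_intros continuous_on_powr_right m_pos
       continuous_on_pos_powr continuous_on_atLeastAtMost_if_atLeast simp: pos_powr_nonneg)

lemma integral_solution_has_derivative:
  assumes X: "integral_solution X" and s: "s > 0"
  shows "(X has_real_derivative -K * s powr (-m-1) * moment X s) (at s)"
proof -
  have cont: "continuous_on {0..} (\<lambda>t. pos_powr (X t))"
    using X continuous_on_pos_powr by (auto simp: integral_solution_def)
  have "((\<lambda>s. 1 - (K/m) * kernel_integral m (\<lambda>t. pos_powr (X t)) s) has_real_derivative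
        0 - (K/m) * (m * s powr (-m-1) * moment X s)) (at s)"
    unfolding moment_def
    by (intro DERIV_diff DERIV_const DERIV_cmult kernel_integral_has_derivative m_pos s cont)
  then have "((\<lambda>s. 1 - (K/m) * kernel_integral m (\<lambda>t. pos_powr (X t)) s) has_real_derivative
        -K * s powr (-m-1) * moment X s) (at s)"
    using m_pos by (simp add: mult.assoc)
  then show ?thesis
    by (rule has_field_derivative_transform_within_open[of _ _ _ "{0<..}"])
       (use s X in \<open>auto simp: integral_solution_def\<close>)
qed

text \<open>If \<open>s\<^sup>m\<^sup>+\<^sup>1 X' + K moment X\<close> is a constant \<open>c\<close>, then so is
  \<open>X + (K/m) kernel_integral + (c/m) s\<^sup>-\<^sup>m\<close>; continuity of \<open>X\<close> at 0 forces \<open>c = 0\<close>.\<close>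

lemma integral_solution_of_derivative:
  assumes cont: "continuous_on {0..} X" and X0: "X 0 = 1"
    and deriv: "\<And>s. s > 0 \<Longrightarrow> (X has_real_derivative s powr (-m-1) * (c - K * moment X s)) (at s)"
  shows "integral_solution X"
proof -
  define F where "F s = X s + (K/m) * kernel_integral m (\<lambda>t. pos_powr (X t)) s" for s
  have contF: "continuous_on {0..} F"
    unfolding F_def
    by (intro continuous_intros continuous_on_kernel_integral m_pos continuous_on_pos_powr cont)
  have "((\<lambda>s. F s + (c/m) * s powr (-m)) has_real_derivative 0) (at s)" if s: "s > 0" for s
  proof -
    have "((\<lambda>s. F s + (c/m) * s powr (-m)) has_real_derivative
        s powr (-m-1) * (c - K * moment X s) + (K/m) * (m * s powr (-m-1) * moment X s)
        + (c/m) * (-m * s powr (-m-1))) (at s)"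
      unfolding F_def moment_def
      by (intro DERIV_add DERIV_cmult deriv[OF s, unfolded moment_def] has_real_derivative_powr s
          kernel_integral_has_derivative m_pos continuous_on_pos_powr cont)
    then show ?thesis using m_pos by (simp add: algebra_simps)
  qed
  then obtain d where d: "\<And>s. s > 0 \<Longrightarrow> F s + (c/m) * s powr (-m) = d"
    using has_field_derivative_zero_constant[of "{0<..}" "\<lambda>s. F s + (c/m) * s powr (-m)"]
    by (force intro: has_field_derivative_at_within)
  have F_lim: "(F \<longlongrightarrow> F 0) (at_right 0)"
    using contF by (simp add: continuous_on_def flip: at_within_Ici_at_right)
  have "c / m = 0"
    by (rule powr_coefficient_eq_0_if_tendsto[OF m_pos F_lim d])
  then have c0: "c = 0"
    using m_pos by simp
  have "F 0 = 1" by (simp add: F_def X0 kernel_integral_def)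
  have "\<forall>\<^sub>F s in at_right 0. F s = d"
    using d c0 by (auto simp: eventually_at_filter)
  then have "(F \<longlongrightarrow> d) (at_right 0)"
    by (rule tendsto_eventually)
  then have "d = 1"
    using tendsto_unique[OF _ F_lim] \<open>F 0 = 1\<close> by simp
  then have "F s = 1" if "s \<ge> 0" for s
    using d[of s] c0 that \<open>F 0 = 1\<close> by (cases "s = 0") auto
  then show ?thesis
    using cont by (auto simp: integral_solution_def F_def eq_diff_eq)
qed

section \<open>Existence and uniqueness by Picard iteration\<close>

text \<open>The truncated nonlinearity is globally Lipschitz; the fixed point stays below 1, where the
  truncation has no effect.\<close>

definition picard_step :: "(real \<Rightarrow> real) \<Rightarrow> real \<Rightarrow> real" where
  "picard_step w s = 1 - (K/m) * kernel_integral m (\<lambda>t. trunc_powr p (w t)) s"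

definition picard_iter :: "nat \<Rightarrow> real \<Rightarrow> real" where
  "picard_iter n = (picard_step ^^ n) (\<lambda>_. 1)"

definition W :: "real \<Rightarrow> real" where
  "W s = 1 + (\<Sum>i. picard_iter (Suc i) s - picard_iter i s)"

lemma continuous_on_picard_step:
  "continuous_on {0..} w \<Longrightarrow> continuous_on {0..} (picard_step w)"
  unfolding picard_step_def[abs_def]
  by (intro continuous_intros continuous_on_kernel_integral m_pos continuous_on_trunc_powr)
     (use p_gt_1 in auto)

lemma continuous_on_picard_iter: "continuous_on {0..} (picard_iter n)"
  by (induction n) (auto simp: picard_iter_def intro: continuous_on_picard_step continuous_intros)

lemma picard_step_le_1:
  assumes "continuous_on {0..} w" "s \<ge> 0"
  shows "picard_step w s \<le> 1"
proof -
  have "kernel_integral m (\<lambda>t. trunc_powr p (w t)) s \<ge> 0"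
    using assms m_pos p_gt_1
    by (intro kernel_integral_nonneg continuous_on_trunc_powr) (auto simp: trunc_powr_nonneg)
  then show ?thesis using K_pos m_pos by (simp add: picard_step_def)
qed

lemma picard_step_diff_le:
  assumes "continuous_on {0..} w1" "continuous_on {0..} w2" "s \<ge> 0"
  shows "\<bar>picard_step w1 s - picard_step w2 s\<bar> \<le> (K/m * p) * integral {0..s} (\<lambda>t. \<bar>w1 t - w2 t\<bar>)"
proof -
  have cont: "continuous_on {0..} (\<lambda>t. trunc_powr p (w1 t))"
    "continuous_on {0..} (\<lambda>t. trunc_powr p (w2 t))"
    using assms p_gt_1 by (auto intro: continuous_on_trunc_powr)
  have "picard_step w1 s - picard_step w2 s
      = (K/m) * (kernel_integral m (\<lambda>t. trunc_powr p (w2 t)) s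
                 - kernel_integral m (\<lambda>t. trunc_powr p (w1 t)) s)"
    by (simp add: picard_step_def algebra_simps)
  then have "\<bar>picard_step w1 s - picard_step w2 s\<bar>
      = (K/m) * \<bar>kernel_integral m (\<lambda>t. trunc_powr p (w1 t)) s
                 - kernel_integral m (\<lambda>t. trunc_powr p (w2 t)) s\<bar>"
    using K_pos m_pos by (simp add: abs_mult abs_minus_commute)
  also have "\<dots> \<le> (K/m) * integral {0..s} (\<lambda>t. \<bar>trunc_powr p (w1 t) - trunc_powr p (w2 t)\<bar>)"
    using K_pos m_pos assms cont by (intro mult_left_mono kernel_integral_diff_le) auto
  also have "\<dots> \<le> (K/m) * integral {0..s} (\<lambda>t. p * \<bar>w1 t - w2 t\<bar>)"
    using K_pos m_pos p_gt_1 assms cont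
    by (intro mult_left_mono integral_le trunc_powr_lipschitz integrable_continuous_interval
        continuous_on_atLeastAtMost_if_atLeast continuous_intros) auto
  finally show ?thesis by simp
qed

lemma picard_iter_diff_le:
  assumes "s \<in> {0..T}"
  shows "\<bar>picard_iter (Suc n) s - picard_iter n s\<bar> \<le> (K/m * T) * ((K/m * p) * s)^n / fact n"
proof (rule iterated_integral_inequality[OF _ _ _ _ assms,
    where d = "\<lambda>n s. \<bar>picard_iter (Suc n) s - picard_iter n s\<bar>"])
  show "continuous_on {0..T} (\<lambda>s. \<bar>picard_iter (Suc n) s - picard_iter n s\<bar>)" for n
    by (intro continuous_intros continuous_on_atLeastAtMost_if_atLeast continuous_on_picard_iter)
  show "0 \<le> K/m * p" using K_pos m_pos p_gt_1 by auto
  fix s assume s: "s \<in> {0..T}"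
  show "\<bar>picard_iter (Suc (Suc n)) s - picard_iter (Suc n) s\<bar>
      \<le> K/m * p * integral {0..s} (\<lambda>s. \<bar>picard_iter (Suc n) s - picard_iter n s\<bar>)" for n
    using picard_step_diff_le[OF continuous_on_picard_iter continuous_on_picard_iter, of s "Suc n" n] s
    by (simp add: picard_iter_def)
  have "\<bar>kernel_integral m (\<lambda>_. trunc_powr p 1) s - kernel_integral m (\<lambda>_. 0) s\<bar>
      \<le> integral {0..s} (\<lambda>t. \<bar>trunc_powr p 1 - 0\<bar>)"
    using s m_pos by (intro kernel_integral_diff_le) auto
  also have "\<dots> \<le> integral {0..s} (\<lambda>t. 1)"
    using p_gt_1 by (intro integral_le) (auto simp: trunc_powr_nonneg trunc_powr_le_1)
  also have "\<dots> \<le> T" using s by simp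
  finally have "(K/m) * \<bar>kernel_integral m (\<lambda>_. trunc_powr p 1) s\<bar> \<le> (K/m) * T"
    using K_pos m_pos by (intro mult_left_mono) (auto simp: kernel_integral_def)
  then show "\<bar>picard_iter (Suc 0) s - picard_iter 0 s\<bar> \<le> K/m * T"
    using K_pos m_pos by (simp add: picard_iter_def picard_step_def abs_mult)
qed

lemma uniform_limit_picard_iter:
  assumes "T \<ge> 0"
  shows "uniform_limit {0..T} picard_iter W sequentially"
proof -
  define c where "c = K/m * p * T"
  have bound: "norm (picard_iter (Suc i) s - picard_iter i s) \<le> (K/m * T) * (inverse (fact i) * c^i)"
    if "s \<in> {0..T}" for i s
  proof -
    have "(K/m * p) * s \<le> (K/m * p) * T" "0 \<le> (K/m * p) * s"
      by (intro mult_left_mono mult_nonneg_nonneg; use that K_pos m_pos p_gt_1 in simp)+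
    then have "(K/m * p) * s \<le> c" "0 \<le> (K/m * p) * s" by (auto simp: c_def)
    then have "((K/m * p) * s)^i \<le> c^i" by (intro power_mono)
    then have "(K/m * T) * ((K/m * p) * s)^i / fact i \<le> (K/m * T) * c^i / fact i"
      using K_pos m_pos assms by (intro divide_right_mono mult_left_mono) auto
    then show ?thesis
      using picard_iter_diff_le[OF that, of i] by (simp add: divide_inverse mult_ac)
  qed
  have "uniform_limit {0..T} (\<lambda>n s. \<Sum>i<n. picard_iter (Suc i) s - picard_iter i s)
      (\<lambda>s. \<Sum>i. picard_iter (Suc i) s - picard_iter i s) sequentially"
    by (rule Weierstrass_m_test[OF bound]) (auto intro!: summable_mult summable_exp)
  then have "uniform_limit {0..T} (\<lambda>n s. 1 + (\<Sum>i<n. picard_iter (Suc i) s - picard_iter i s)) W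
      sequentially"
    unfolding W_def[abs_def] by (intro uniform_limit_intros) auto
  moreover have "1 + (\<Sum>i<n. picard_iter (Suc i) s - picard_iter i s) = picard_iter n s" for n s
    using sum_lessThan_telescope[of "\<lambda>i. picard_iter i s" n] by (simp add: picard_iter_def)
  ultimately show ?thesis by simp
qed

lemma continuous_on_W: "continuous_on {0..} W"
proof (rule continuous_on_atLeast_if_atLeastAtMost)
  fix T :: real assume "T > 0"
  show "continuous_on {0..T} W"
    by (rule uniform_limit_theorem[OF always_eventually uniform_limit_picard_iter])
       (use \<open>T > 0\<close> in \<open>auto intro: continuous_on_atLeastAtMost_if_atLeast continuous_on_picard_iter\<close>)
qed

lemma W_eq_picard_step:
  assumes s: "s \<ge> 0"
  shows "W s = picard_step W s"
proof -
  have UL: "uniform_limit {0..s} picard_iter W sequentially"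
    using uniform_limit_picard_iter s by blast
  then have "(\<lambda>n. picard_iter (Suc n) s) \<longlonglongrightarrow> W s"
    using s by (intro LIMSEQ_Suc tendsto_uniform_limitI[OF UL]) auto
  moreover have "(\<lambda>n. picard_iter (Suc n) s) \<longlonglongrightarrow> picard_step W s"
  proof -
    have "uniform_limit {0..s} (\<lambda>n t. \<bar>picard_iter n t - W t\<bar>) (\<lambda>_. 0) sequentially"
      using UL by (simp add: uniform_limit_iff dist_real_def)
    then obtain I J where I: "\<And>n. ((\<lambda>t. \<bar>picard_iter n t - W t\<bar>) has_integral I n) {0..s}"
      and J: "((\<lambda>_. 0) has_integral J) {0..s}" and IJ: "I \<longlonglongrightarrow> J"
      by (rule uniform_limit_integral)
         (auto intro!: continuous_intros continuous_on_atLeastAtMost_if_atLeast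
           continuous_on_picard_iter continuous_on_W)
    have "(\<lambda>n. integral {0..s} (\<lambda>t. \<bar>picard_iter n t - W t\<bar>)) = I"
      using I by (auto intro: integral_unique)
    moreover have "J = 0" using J by (simp add: has_integral_0_eq)
    ultimately have "(\<lambda>n. (K/m * p) * integral {0..s} (\<lambda>t. \<bar>picard_iter n t - W t\<bar>)) \<longlonglongrightarrow> 0"
      using IJ tendsto_mult_right_zero by blast
    moreover have "\<forall>\<^sub>F n in sequentially. norm (picard_step (picard_iter n) s - picard_step W s)
        \<le> (K/m * p) * integral {0..s} (\<lambda>t. \<bar>picard_iter n t - W t\<bar>)"
      using picard_step_diff_le[OF continuous_on_picard_iter continuous_on_W s] by simp
    ultimately have "(\<lambda>n. picard_step (picard_iter n) s - picard_step W s) \<longlonglongrightarrow> 0"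
      by (rule Lim_null_comparison[rotated])
    then show ?thesis
      by (simp add: picard_iter_def LIM_zero_iff)
  qed
  ultimately show ?thesis by (rule LIMSEQ_unique)
qed

lemma W_le_1: "s \<ge> 0 \<Longrightarrow> W s \<le> 1"
  using W_eq_picard_step picard_step_le_1[OF continuous_on_W] by simp

lemma kernel_integral_trunc_powr_eq:
  "(\<And>t. t \<ge> 0 \<Longrightarrow> X t \<le> 1) \<Longrightarrow>
    kernel_integral m (\<lambda>t. trunc_powr p (X t)) s = kernel_integral m (\<lambda>t. pos_powr (X t)) s"
  by (rule kernel_integral_cong) (simp add: trunc_powr_eq pos_powr_def)

lemma integral_solution_eq_picard_step:
  assumes X: "integral_solution X" and s: "s \<ge> 0"
  shows "X s = picard_step X s"
  using X s integral_solution_le_1[OF X]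
  by (simp add: integral_solution_def picard_step_def kernel_integral_trunc_powr_eq)

lemma integral_solution_W: "integral_solution W"
  using continuous_on_W W_eq_picard_step W_le_1
  by (simp add: integral_solution_def picard_step_def kernel_integral_trunc_powr_eq)

lemma integral_solution_unique:
  assumes X: "integral_solution X" and Y: "integral_solution Y" and s: "s \<ge> 0"
  shows "X s = Y s"
proof -
  have cX: "continuous_on {0..} X" and cY: "continuous_on {0..} Y"
    using X Y by (auto simp: integral_solution_def)
  have "\<bar>X s - Y s\<bar> \<le> 0"
  proof (rule integral_inequality_imp_nonpos[where T = s and d = "\<lambda>t. \<bar>X t - Y t\<bar>" and M = "K/m * p"])
    show "continuous_on {0..s} (\<lambda>t. \<bar>X t - Y t\<bar>)"
      by (intro continuous_intros continuous_on_atLeastAtMost_if_atLeast cX cY)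
    show "\<bar>X t - Y t\<bar> \<le> K/m * p * integral {0..t} (\<lambda>t. \<bar>X t - Y t\<bar>)" if "t \<in> {0..s}" for t
      using picard_step_diff_le[OF cX cY, of t] that
        integral_solution_eq_picard_step[OF X, of t] integral_solution_eq_picard_step[OF Y, of t]
      by simp
  qed (use K_pos m_pos p_gt_1 s in auto)
  then show ?thesis by simp
qed

section \<open>Between the integral equation and the radial problem\<close>

definition radial_of :: "(real \<Rightarrow> real) \<Rightarrow> real \<Rightarrow> real" where
  "radial_of X r = r powr (2 - real N) * X (r powr -a)"

text \<open>\<open>flux X (r\<^sup>-\<^sup>a) = r\<^sup>N\<^sup>-\<^sup>1 v'(r)\<close> for \<open>v = radial_of X\<close>, and the radial equation reads
  \<open>(r\<^sup>N\<^sup>-\<^sup>1 v')' = -k r\<^sup>N\<^sup>-\<^sup>1\<^sup>+\<^sup>\<beta> v\<^sub>+\<^sup>p\<close>.\<close>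

definition flux :: "(real \<Rightarrow> real) \<Rightarrow> real \<Rightarrow> real" where
  "flux X s = (2 - real N) * X s + a * K * (s powr (-m) * moment X s)"

lemma flux_has_derivative:
  assumes X: "integral_solution X" and s: "s > 0"
  shows "(flux X has_real_derivative a * K * pos_powr (X s)) (at s)"
proof -
  have cont: "continuous_on {0..} X" using X by (simp add: integral_solution_def)
  have "(flux X has_real_derivative (2 - real N) * (-K * s powr (-m-1) * moment X s)
      + a * K * ((-m * s powr (-m-1)) * moment X s + (s powr m * pos_powr (X s)) * s powr (-m))) (at s)"
    unfolding flux_def[abs_def]
    by (intro DERIV_add DERIV_cmult DERIV_mult integral_solution_has_derivative X s
        has_real_derivative_powr moment_has_derivative cont)
  moreover have "s powr m * s powr (-m) = 1" using s by (simp flip: powr_add)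
  moreover have "real N = a * m + 2" using a_mult_m by simp
  ultimately show ?thesis by (simp add: algebra_simps)
qed

lemma radial_of_has_derivative:
  assumes X: "integral_solution X" and r: "r > 0"
  shows "(radial_of X has_real_derivative r powr (1 - real N) * flux X (r powr -a)) (at r)"
proof -
  let ?s = "r powr -a"
  have "(radial_of X has_real_derivative (2 - real N) * r powr (2 - real N - 1) * X ?s
      + (-K * ?s powr (-m-1) * moment X ?s) * (-a * r powr (-a-1)) * r powr (2 - real N)) (at r)"
    unfolding radial_of_def[abs_def] using r
    by (intro DERIV_mult has_real_derivative_powr DERIV_chain2[OF integral_solution_has_derivative[OF X]])
       auto
  also have "(2 - real N) * r powr (2 - real N - 1) * X ?s
      + (-K * ?s powr (-m-1) * moment X ?s) * (-a * r powr (-a-1)) * r powr (2 - real N)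
    = (2 - real N) * r powr (1 - real N) * X ?s
      + a * K * moment X ?s * (?s powr (-m-1) * r powr (-a-1) * r powr (2 - real N))"
    by (simp add: algebra_simps)
  also have "?s powr (-m-1) * r powr (-a-1) * r powr (2 - real N) = r powr (1 - real N) * ?s powr (-m)"
    using r by (simp add: powr_powr algebra_simps flip: powr_add)
  finally show ?thesis
    by (simp add: flux_def algebra_simps)
qed

lemma deriv_radial_of:
  "integral_solution X \<Longrightarrow> r > 0 \<Longrightarrow> deriv (radial_of X) r = r powr (1 - real N) * flux X (r powr -a)"
  by (rule DERIV_imp_deriv[OF radial_of_has_derivative])

lemma deriv_radial_of_has_derivative:
  assumes X: "integral_solution X" and r: "r > 0"
  shows "(deriv (radial_of X) has_real_derivative
      (1 - real N) / r * deriv (radial_of X) r - k * r powr (- real N - a) * pos_powr (X (r powr -a))) (at r)"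
proof -
  let ?s = "r powr -a"
  have "((\<lambda>r. r powr (1 - real N) * flux X (r powr -a)) has_real_derivative
      (1 - real N) * r powr (1 - real N - 1) * flux X ?s
      + (a * K * pos_powr (X ?s)) * (-a * r powr (-a-1)) * r powr (1 - real N)) (at r)"
    using r by (intro DERIV_mult has_real_derivative_powr DERIV_chain2[OF flux_has_derivative[OF X]]) auto
  moreover have "r powr (1 - real N - 1) = r powr (1 - real N) / r"
    using powr_diff[of r "1 - real N" 1] r by simp
  moreover have "r powr (- real N - a) = r powr (-a-1) * r powr (1 - real N)"
    by (simp only: flip: powr_add) (simp add: algebra_simps)
  moreover have "(1 - n) * (A / r) * F + (a * K * g) * (-a * B) * A
      = (1 - n) / r * (A * F) - a^2 * K * (B * A) * g" for n A B F g :: real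
    by (simp add: power2_eq_square algebra_simps)
  ultimately have "((\<lambda>r. r powr (1 - real N) * flux X (r powr -a)) has_real_derivative
      (1 - real N) / r * (r powr (1 - real N) * flux X ?s)
      - k * r powr (- real N - a) * pos_powr (X ?s)) (at r)"
    by (simp only: a_sq_mult_K)
  then have "(deriv (radial_of X) has_real_derivative
      (1 - real N) / r * (r powr (1 - real N) * flux X ?s)
      - k * r powr (- real N - a) * pos_powr (X ?s)) (at r)"
    by (rule has_field_derivative_transform_within_open[of _ _ _ "{0<..}"])
       (use r X in \<open>auto simp: deriv_radial_of\<close>)
  then show ?thesis
    using X r by (simp add: deriv_radial_of)
qed

lemma deriv_deriv_radial_of:
  "integral_solution X \<Longrightarrow> r > 0 \<Longrightarrow> deriv (deriv (radial_of X)) r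
      = (1 - real N) / r * deriv (radial_of X) r - k * r powr (- real N - a) * pos_powr (X (r powr -a))"
  by (rule DERIV_imp_deriv[OF deriv_radial_of_has_derivative])

lemma C2_on_radial_of:
  assumes X: "integral_solution X"
  shows "C2_on {0<..} (radial_of X)"
proof -
  have "continuous_on {0<..} (\<lambda>r. (1 - real N) / r * deriv (radial_of X) r
      - k * r powr (- real N - a) * pos_powr (X (r powr -a)))"
  proof (intro continuous_intros continuous_on_pos_powr)
    show "continuous_on {0<..} (deriv (radial_of X))"
      using deriv_radial_of_has_derivative[OF X]
      by (intro continuous_at_imp_continuous_on) (auto intro: DERIV_isCont)
    have "continuous_on {0..} X"
      using X by (simp add: integral_solution_def)
    then show "continuous_on {0<..} (\<lambda>r. X (r powr -a))"
      by (rule continuous_on_compose2) (auto intro!: continuous_intros)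
  qed auto
  then have "continuous_on {0<..} (deriv (deriv (radial_of X)))"
    by (rule continuous_on_eq) (simp add: deriv_deriv_radial_of[OF X])
  then show ?thesis
    unfolding C2_on_def
    using radial_of_has_derivative[OF X] deriv_radial_of_has_derivative[OF X]
    by (auto simp: real_differentiable_def)
qed

lemma radial_of_ode:
  assumes X: "integral_solution X" and r: "r > 0"
  shows "deriv (deriv (radial_of X)) r + (real N - 1) / r * deriv (radial_of X) r
      + k * r powr \<beta> * max (radial_of X r) 0 powr p = 0"
proof -
  have "max (radial_of X r) 0 powr p = (r powr (2 - real N)) powr p * pos_powr (X (r powr -a))"
    using r by (simp add: radial_of_def pos_powr_mult flip: pos_powr_def)
  also have "(r powr (2 - real N)) powr p = r powr (- real N - a) / r powr \<beta>"
    by (simp add: a_def algebra_simps powr_powr flip: powr_diff)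
  finally have "k * r powr \<beta> * max (radial_of X r) 0 powr p
      = k * r powr (- real N - a) * pos_powr (X (r powr -a))"
    by simp
  moreover have "(real N - 1) / r = - ((1 - real N) / r)"
    by (simp add: minus_divide_left)
  ultimately show ?thesis by (simp add: deriv_deriv_radial_of[OF X r])
qed

lemma tendsto_radial_of:
  assumes X: "integral_solution X"
  shows "((\<lambda>r. r ^ (N - 2) * radial_of X r) \<longlongrightarrow> 1) at_top"
proof -
  have "((\<lambda>r::real. r powr -a) \<longlongrightarrow> 0) at_top"
    using a_pos by (intro tendsto_neg_powr filterlim_ident) auto
  moreover have "\<forall>\<^sub>F r in at_top. r powr -a \<in> {0..} - {0::real}"
    by (simp add: eventually_at_top_dense)
  ultimately have "filterlim (\<lambda>r::real. r powr -a) (at 0 within {0..}) at_top"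
    by (rule filterlim_at_withinI)
  moreover have "continuous_on {0..} X"
    using X by (simp add: integral_solution_def)
  then have "(X \<longlongrightarrow> 1) (at 0 within {0..})"
    using integral_solution_0[OF X] by (metis atLeast_iff continuous_on_def order_refl)
  ultimately have "((\<lambda>r. X (r powr -a)) \<longlongrightarrow> 1) at_top"
    by (rule filterlim_compose[rotated])
  moreover have "\<forall>\<^sub>F r in at_top. X (r powr -a) = r ^ (N - 2) * radial_of X r"
    using eventually_gt_at_top[of "0::real"]
  proof eventually_elim
    case (elim r)
    then have "r ^ (N - 2) * r powr (2 - real N) = 1"
      using N_ge_3 by (simp add: powr_realpow[symmetric] of_nat_diff flip: powr_add)
    then show ?case by (simp add: radial_of_def)
  qed
  ultimately show ?thesis by (rule Lim_transform_eventually)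
qed

lemma radial_sol_radial_of: "integral_solution X \<Longrightarrow> radial_sol N \<beta> k p (radial_of X)"
  unfolding radial_sol_def using C2_on_radial_of radial_of_ode tendsto_radial_of by blast

lemma powr_scaling_identity:
  "s powr (-1/a - 1) * (s powr (-1/a) * (s powr (-1/a)) powr \<beta>) = s powr m * (s powr (-m)) powr p"
proof -
  have "a * ((-1/a - 1) + (-1/a) + (-1/a * \<beta>)) = (real N - 2) * (1 - p)"
    using a_pos by (simp add: field_simps) (simp add: a_def algebra_simps)
  also have "\<dots> = a * (m + -m * p)"
    by (simp only: a_mult_m[symmetric]) (simp add: algebra_simps)
  finally have exponent: "(-1/a - 1) + (-1/a) + (-1/a * \<beta>) = m + -m * p"
    using a_pos by simp
  have "s powr (-1/a - 1) * (s powr (-1/a) * (s powr (-1/a)) powr \<beta>)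
      = s powr ((-1/a - 1) + (-1/a) + (-1/a * \<beta>))"
    by (simp only: powr_powr powr_add)
  also have "\<dots> = s powr m * (s powr (-m)) powr p"
    by (simp only: exponent powr_powr powr_add)
  finally show ?thesis .
qed

text \<open>The inverse transformation: \<open>profile_of w s = r\<^sup>N\<^sup>-\<^sup>2 w(r)\<close> with \<open>r = s\<^sup>-\<^sup>1\<^sup>/\<^sup>a\<close>.\<close>

definition profile_of :: "(real \<Rightarrow> real) \<Rightarrow> real \<Rightarrow> real" where
  "profile_of w s = (if s = 0 then 1 else s powr (-m) * w (s powr (-1/a)))"

definition profile_flux :: "(real \<Rightarrow> real) \<Rightarrow> real \<Rightarrow> real" where
  "profile_flux w s = ((real N - 2) * w (s powr (-1/a)) + s powr (-1/a) * deriv w (s powr (-1/a))) / a"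

lemma radial_of_profile_of: "r > 0 \<Longrightarrow> radial_of (profile_of w) r = w r"
  using a_pos a_mult_m
  by (simp add: radial_of_def profile_of_def powr_powr mult.assoc[symmetric] flip: powr_add)

context
  fixes w :: "real \<Rightarrow> real"
  assumes w: "radial_sol N \<beta> k p w"
begin

lemma radial_sol_has_derivative: "r > 0 \<Longrightarrow> (w has_real_derivative deriv w r) (at r)"
  using w by (auto simp: radial_sol_def C2_on_def DERIV_deriv_iff_real_differentiable)

lemma radial_sol_deriv_has_derivative: "r > 0 \<Longrightarrow> (deriv w has_real_derivative deriv (deriv w) r) (at r)"
  using w by (auto simp: radial_sol_def C2_on_def DERIV_deriv_iff_real_differentiable)

lemma radial_sol_divergence_form:
  "r > 0 \<Longrightarrow> (real N - 1) * deriv w r + r * deriv (deriv w) r = - k * (r * r powr \<beta>) * pos_powr (w r)"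
  using w by (auto simp: radial_sol_def pos_powr_def field_simps)

lemma profile_of_has_derivative:
  assumes s: "s > 0"
  shows "(profile_of w has_real_derivative -(s powr (-m-1) * profile_flux w s)) (at s)"
proof -
  let ?r = "s powr (-1/a)"
  have "((\<lambda>s. s powr (-m) * w (s powr (-1/a))) has_real_derivative
      (-m * s powr (-m-1)) * w ?r + (deriv w ?r * ((-1/a) * s powr (-1/a-1))) * s powr (-m)) (at s)"
    using s by (intro DERIV_mult has_real_derivative_powr DERIV_chain2[OF radial_sol_has_derivative]) auto
  moreover have "(-m * s powr (-m-1)) * w ?r + (deriv w ?r * ((-1/a) * s powr (-1/a-1))) * s powr (-m)
      = -(s powr (-m-1) * profile_flux w s)"
  proof -
    have "s powr (-1/a-1) * s powr (-m) = s powr (-m-1) * ?r"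
      by (simp add: algebra_simps flip: powr_add)
    then show ?thesis
      unfolding profile_flux_def using a_pos by (simp add: m_def field_simps)
  qed
  ultimately have "((\<lambda>s. s powr (-m) * w (s powr (-1/a))) has_real_derivative
      -(s powr (-m-1) * profile_flux w s)) (at s)"
    by simp
  then show ?thesis
    by (rule has_field_derivative_transform_within_open[of _ _ _ "{0<..}"])
       (use s in \<open>auto simp: profile_of_def\<close>)
qed

lemma profile_flux_has_derivative:
  assumes s: "s > 0"
  shows "(profile_flux w has_real_derivative K * s powr m * pos_powr (profile_of w s)) (at s)"
proof -
  define R where "R = s powr (-1/a)"
  define D where "D = (-1/a) * s powr (-1/a - 1)"
  have R: "R > 0" using s by (simp add: R_def)
  have "(profile_flux w has_real_derivative
      ((real N - 2) * (deriv w R * D) + (D * deriv w R + (deriv (deriv w) R * D) * R)) / a) (at s)"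
    unfolding profile_flux_def[abs_def] R_def D_def using s
    by (intro DERIV_cdivide DERIV_add DERIV_cmult DERIV_mult has_real_derivative_powr
        DERIV_chain2[OF radial_sol_has_derivative] DERIV_chain2[OF radial_sol_deriv_has_derivative])
       auto
  also have "((real N - 2) * (deriv w R * D) + (D * deriv w R + (deriv (deriv w) R * D) * R)) / a
      = D / a * ((real N - 1) * deriv w R + R * deriv (deriv w) R)"
    using a_pos by (simp add: field_simps)
  also have "\<dots> = D / a * (- k * (R * R powr \<beta>) * pos_powr (w R))"
    by (simp add: radial_sol_divergence_form R)
  also have "\<dots> = k / a^2 * (s powr (-1/a - 1) * (R * R powr \<beta>)) * pos_powr (w R)"
    using a_pos by (simp add: D_def power2_eq_square)
  also have "k / a^2 = K"
    by (simp add: K_def)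
  also have "s powr (-1/a - 1) * (R * R powr \<beta>) = s powr m * (s powr (-m)) powr p"
    unfolding R_def by (rule powr_scaling_identity)
  also have "K * (s powr m * (s powr (-m)) powr p) * pos_powr (w R)
      = K * s powr m * pos_powr (profile_of w s)"
    using s by (simp add: profile_of_def R_def pos_powr_mult)
  finally show ?thesis .
qed

lemma continuous_on_profile_of: "continuous_on {0..} (profile_of w)"
proof -
  have "((\<lambda>r. r ^ (N - 2) * w r) \<longlongrightarrow> 1) at_top"
    using w by (simp add: radial_sol_def)
  from filterlim_compose[OF this filterlim_powr_neg_at_right_0[of "1/a"]]
  have "((\<lambda>s. (s powr (-1/a)) ^ (N - 2) * w (s powr (-1/a))) \<longlongrightarrow> 1) (at_right 0)"
    using a_pos by simp
  moreover have "\<forall>\<^sub>F s in at_right 0. (s powr (-1/a)) ^ (N - 2) * w (s powr (-1/a)) = profile_of w s"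
  proof (rule eventually_at_rightI[of 0 1])
    fix s :: real assume "s \<in> {0<..<1}"
    then have "(s powr (-1/a)) ^ (N - 2) = s powr (-m)"
      using N_ge_3 a_pos by (simp add: powr_realpow[symmetric] powr_powr m_def of_nat_diff)
    then show "(s powr (-1/a)) ^ (N - 2) * w (s powr (-1/a)) = profile_of w s"
      using \<open>s \<in> {0<..<1}\<close> by (simp add: profile_of_def)
  qed simp
  ultimately have "(profile_of w \<longlongrightarrow> 1) (at_right 0)"
    by (rule Lim_transform_eventually)
  moreover have "profile_of w 0 = 1"
    by (simp add: profile_of_def)
  ultimately have "continuous (at 0 within {0..}) (profile_of w)"
    by (simp add: continuous_within at_within_Ici_at_right)
  moreover have "isCont (profile_of w) s" if "s > 0" for s
    using profile_of_has_derivative[OF that] by (rule DERIV_isCont)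
  ultimately show ?thesis
    unfolding continuous_on_eq_continuous_within
    by (auto simp: order_le_less continuous_at_imp_continuous_at_within)
qed

lemma integral_solution_profile_of: "integral_solution (profile_of w)"
proof -
  let ?U = "profile_of w"
  have "((\<lambda>s. profile_flux w s - K * moment ?U s) has_real_derivative 0) (at s)" if "s > 0" for s
    using DERIV_diff[OF profile_flux_has_derivative[OF that]
        DERIV_cmult[OF moment_has_derivative[OF continuous_on_profile_of that], of K]]
    by (simp add: mult.assoc)
  then obtain c where c: "\<And>s. s > 0 \<Longrightarrow> profile_flux w s - K * moment ?U s = c"
    using has_field_derivative_zero_constant[of "{0<..}" "\<lambda>s. profile_flux w s - K * moment ?U s"]
    by (force intro: has_field_derivative_at_within)
  show ?thesis
  proof (rule integral_solution_of_derivative[OF continuous_on_profile_of])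
    show "?U 0 = 1" by (simp add: profile_of_def)
    fix s :: real assume s: "s > 0"
    have "s powr (-m-1) * (- c - K * moment ?U s) = -(s powr (-m-1) * profile_flux w s)"
      using c[OF s] by (simp add: algebra_simps)
    with profile_of_has_derivative[OF s]
    show "(?U has_real_derivative s powr (-m-1) * (- c - K * moment ?U s)) (at s)"
      by simp
  qed
qed

end

lemma radial_sol_eq_radial_of_W:
  assumes "radial_sol N \<beta> k p w" "r > 0"
  shows "w r = radial_of W r"
proof -
  have "W (r powr -a) = profile_of w (r powr -a)"
    using integral_solution_unique[OF integral_solution_W integral_solution_profile_of[OF assms(1)]]
    by simp
  then show ?thesis
    using radial_of_profile_of[OF assms(2), of w] by (simp add: radial_of_def)
qed

section \<open>A zero of the solution via a Pohozaev-type function\<close>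

lemma W_0: "W 0 = 1"
  by (rule integral_solution_0[OF integral_solution_W])

lemma W_has_derivative: "s > 0 \<Longrightarrow> (W has_real_derivative -K * s powr (-m-1) * moment W s) (at s)"
  by (rule integral_solution_has_derivative[OF integral_solution_W])

lemma moment_W_has_derivative: "s > 0 \<Longrightarrow> (moment W has_real_derivative s powr m * pos_powr (W s)) (at s)"
  by (rule moment_has_derivative[OF continuous_on_W])

lemma moment_W_nonneg: "s \<ge> 0 \<Longrightarrow> moment W s \<ge> 0"
  by (rule moment_nonneg[OF _ continuous_on_W])

lemma W_antimono:
  assumes "0 \<le> x" "x \<le> y"
  shows "W y \<le> W x"
proof (rule DERIV_nonpos_imp_decreasing_open[OF assms(2)])
  fix t assume "x < t" "t < y"
  then have "t > 0" using assms by auto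
  then show "\<exists>y. (W has_real_derivative y) (at t) \<and> y \<le> 0"
    using W_has_derivative K_pos moment_W_nonneg[of t] by (intro exI conjI) auto
qed (use assms in \<open>auto intro: continuous_on_subset[OF continuous_on_W]\<close>)

lemma W_pos_below: "W s > 0 \<Longrightarrow> 0 \<le> t \<Longrightarrow> t \<le> s \<Longrightarrow> W t > 0"
  using W_antimono[of t s] by simp

lemma moment_W_lower:
  assumes s: "s \<ge> 0"
  shows "pos_powr (W s) * (s powr (m+1) / (m+1)) \<le> moment W s"
proof -
  have "pos_powr (W s) * (s powr (m+1) / (m+1)) = integral {0..s} (\<lambda>t. pos_powr (W s) * t powr m)"
    using has_integral_powr[OF m_pos s] by (simp add: integral_unique)
  also have "\<dots> \<le> moment W s"
    unfolding moment_def moment_integral_def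
  proof (rule integral_le)
    show "(\<lambda>t. pos_powr (W s) * t powr m) integrable_on {0..s}"
      by (intro integrable_continuous_interval continuous_intros continuous_on_powr_right m_pos) auto
    show "(\<lambda>t. t powr m * pos_powr (W t)) integrable_on {0..s}"
      by (intro integrable_continuous_interval continuous_intros continuous_on_powr_right m_pos
          continuous_on_pos_powr continuous_on_atLeastAtMost_if_atLeast continuous_on_W) auto
    show "pos_powr (W s) * t powr m \<le> t powr m * pos_powr (W t)" if "t \<in> {0..s}" for t
      using that pos_powr_mono[OF W_antimono[of t s]] by (simp add: mult.commute mult_left_mono)
  qed
  finally show ?thesis .
qed

lemma moment_W_upper:
  assumes s: "s \<ge> 0"
  shows "moment W s \<le> s powr (m+1) / (m+1)"
proof -
  have "moment W s \<le> integral {0..s} (\<lambda>t. t powr m)"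
    unfolding moment_def moment_integral_def
  proof (rule integral_le)
    show "(\<lambda>t. t powr m * pos_powr (W t)) integrable_on {0..s}"
      by (intro integrable_continuous_interval continuous_intros continuous_on_powr_right m_pos
          continuous_on_pos_powr continuous_on_atLeastAtMost_if_atLeast continuous_on_W) auto
    show "(\<lambda>t. t powr m) integrable_on {0..s}"
      using has_integral_powr[OF m_pos s] by blast
    show "t powr m * pos_powr (W t) \<le> t powr m" if "t \<in> {0..s}" for t
    proof -
      have "pos_powr (W t) \<le> 1"
        using W_le_1[of t] that p_gt_1 by (auto simp: pos_powr_def intro: powr_le1)
      then show ?thesis by (simp add: mult_left_le)
    qed
  qed
  also have "\<dots> = s powr (m+1) / (m+1)"
    using has_integral_powr[OF m_pos s] by (rule integral_unique)
  finally show ?thesis .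
qed

lemma W_decay:
  assumes s: "s \<ge> 0" and pos: "W s > 0"
  shows "1 + (p - 1) * (K / (m+1)) * s \<le> W s powr (1 - p)"
proof -
  define h where "h t = W t powr (1 - p) - (p - 1) * (K / (m+1)) * t" for t
  have "h 0 \<le> h s"
  proof (rule DERIV_nonneg_imp_increasing_open[OF s])
    fix t assume t: "0 < t" "t < s"
    have Wt: "W t > 0" using W_pos_below[OF pos] t by simp
    have "(h has_real_derivative (1 - p) * W t powr (1 - p - of_nat 1) * (-K * t powr (-m-1) * moment W t)
        - (p - 1) * (K / (m+1))) (at t)"
      unfolding h_def[abs_def]
      using DERIV_diff[OF DERIV_fun_powr[where r = "1 - p", OF W_has_derivative[OF t(1)] Wt]
          DERIV_cmult[OF DERIV_ident, of "(p - 1) * (K / (m+1))"]]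
      by simp
    moreover have "(p - 1) * (K / (m+1))
        \<le> (1 - p) * W t powr (1 - p - of_nat 1) * (-K * t powr (-m-1) * moment W t)"
    proof -
      define A T where "A = W t powr p" and "T = t powr (m+1)"
      have pos: "A > 0" "T > 0" using Wt t by (auto simp: A_def T_def)
      have "W t powr (1 - p - of_nat 1) = 1 / A" "t powr (-m-1) = 1 / T"
        by (simp_all add: A_def T_def powr_minus_divide[symmetric])
      moreover have "(p - 1) * (K / (m+1)) = (p - 1) * K * (A * T / (m+1)) / (A * T)"
        using pos by simp
      moreover have "\<dots> \<le> (p - 1) * K * moment W t / (A * T)"
        using moment_W_lower[of t] t Wt pos p_gt_1 K_pos
        by (intro divide_right_mono mult_left_mono) (auto simp: A_def T_def pos_powr_def)
      moreover have "(p - 1) * K * moment W t / (A * T) = (1 - p) * (1 / A) * (-K * (1 / T) * moment W t)"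
        using pos by (simp add: field_simps)
      ultimately show ?thesis by simp
    qed
    ultimately show "\<exists>y. (h has_real_derivative y) (at t) \<and> 0 \<le> y" by force
  next
    have "\<forall>x\<in>{0..s}. W x \<noteq> 0" using W_pos_below[OF pos] by force
    then show "continuous_on {0..s} h"
      unfolding h_def[abs_def]
      by (intro continuous_intros continuous_on_subset[OF continuous_on_W]) auto
  qed
  then show ?thesis by (simp add: h_def W_0)
qed

definition pohozaev :: "real \<Rightarrow> real" where
  "pohozaev s = K^2 / 2 * moment W s ^ 2 * s powr (-m) + K / (p+1) * s powr (m+1) * W s powr (p+1)
     - m / 2 * K * W s * moment W s"

lemma pohozaev_coeff_pos: "(m+1) / (p+1) - m/2 > 0"
proof -
  have "m * (p + 1) < 2 * (m + 1)" using m_mult_p_minus_1_lt_2 by (simp add: algebra_simps)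
  then show ?thesis using p_gt_1 by (simp add: field_simps)
qed

lemma pohozaev_has_derivative:
  assumes s: "s > 0" and pos: "W s > 0"
  shows "(pohozaev has_real_derivative ((m+1) / (p+1) - m/2) * K * s powr m * W s powr (p+1)) (at s)"
  unfolding pohozaev_def[abs_def]
proof (rule DERIV_cong[OF DERIV_diff[OF DERIV_add]])
  show "((\<lambda>x. K^2 / 2 * moment W x ^ 2 * x powr (-m)) has_real_derivative
      K^2 / 2 * (of_nat 2 * (s powr m * pos_powr (W s) * moment W s ^ (2 - Suc 0))) * s powr (-m)
      + -m * s powr (-m - 1) * (K^2 / 2 * moment W s ^ 2)) (at s)"
    by (intro DERIV_mult DERIV_cmult DERIV_power has_real_derivative_powr moment_W_has_derivative s)
  show "((\<lambda>x. K / (p+1) * x powr (m+1) * W x powr (p+1)) has_real_derivative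
      K / (p+1) * ((m+1) * s powr (m+1-1)) * W s powr (p+1)
      + (p+1) * W s powr (p+1 - of_nat 1) * (-K * s powr (-m-1) * moment W s) * (K / (p+1) * s powr (m+1))) (at s)"
    by (intro DERIV_mult DERIV_cmult has_real_derivative_powr DERIV_fun_powr W_has_derivative s pos)
  show "((\<lambda>x. m / 2 * K * W x * moment W x) has_real_derivative
      m / 2 * K * (-K * s powr (-m-1) * moment W s) * moment W s
      + s powr m * pos_powr (W s) * (m / 2 * K * W s)) (at s)"
    by (intro DERIV_mult DERIV_cmult W_has_derivative moment_W_has_derivative s)
  \<comment> \<open>stated for plain variables, so that \<open>field_simps\<close> treats the powers as atoms\<close>
  have field_identity: "K^2/2 * (of_nat 2 * (S * Vp * G ^ (2 - Suc 0))) * (1/S)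
      + -m * (1/(S * s)) * (K^2/2 * G^2)
      + (K/q * ((m+1) * S) * (V * Vp) + q * Vp * (-K * (1/(S * s)) * G) * (K/q * (S * s)))
      - (m/2*K*(-K*(1/(S * s))*G)*G + S * Vp * (m/2*K*V))
      = ((m+1)/q - m/2) * K * S * (V * Vp)"
    if "S \<noteq> 0" "s \<noteq> 0" "q \<noteq> 0" for S s q V Vp G :: real
    using that by (simp add: field_simps power2_eq_square)
  define S V G where "S = s powr m" and "V = W s" and "G = moment W s"
  have "S > 0" "V > 0" using s pos by (auto simp: S_def V_def)
  have eqs: "s powr (m+1) = S * s" "s powr (-m-1) = 1 / (S * s)" "s powr (-m) = 1 / S"
    "s powr (m+1-1) = S" "V powr (p+1) = V * V powr p" "V powr (p+1 - of_nat 1) = V powr p"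
    "pos_powr V = V powr p"
    using s powr_minus_divide[of s "m+1"] \<open>V > 0\<close>
    by (simp_all add: S_def pos_powr_def powr_add powr_minus_divide)
  show "K^2 / 2 * (of_nat 2 * (s powr m * pos_powr (W s) * moment W s ^ (2 - Suc 0))) * s powr (-m)
      + -m * s powr (-m - 1) * (K^2 / 2 * moment W s ^ 2)
      + (K / (p+1) * ((m+1) * s powr (m+1-1)) * W s powr (p+1)
        + (p+1) * W s powr (p+1 - of_nat 1) * (-K * s powr (-m-1) * moment W s) * (K / (p+1) * s powr (m+1)))
      - (m / 2 * K * (-K * s powr (-m-1) * moment W s) * moment W s
        + s powr m * pos_powr (W s) * (m / 2 * K * W s))
      = ((m+1) / (p+1) - m/2) * K * s powr m * W s powr (p+1)"
    unfolding S_def[symmetric] V_def[symmetric] G_def[symmetric] eqs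
  proof (rule field_identity)
    show "S \<noteq> 0" "s \<noteq> 0" "p + 1 \<noteq> 0" using \<open>S > 0\<close> s p_gt_1 by auto
  qed
qed

lemma pohozaev_strict_mono:
  assumes "0 < x" "x < y" "W y > 0"
  shows "pohozaev x < pohozaev y"
proof -
  let ?D = "\<lambda>z. ((m+1) / (p+1) - m/2) * K * z powr m * W z powr (p+1)"
  obtain z where z: "x < z" "z < y" "pohozaev y - pohozaev x = (y - x) * ?D z"
    using MVT2[OF assms(2), of pohozaev ?D] pohozaev_has_derivative W_pos_below[OF assms(3)] assms
    by force
  have "?D z > 0"
    using pohozaev_coeff_pos K_pos W_pos_below[OF assms(3), of z] z assms by simp
  moreover have "y - x > 0" using z by simp
  ultimately have "(y - x) * ?D z > 0"
    by (simp only: mult_pos_pos)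
  then show ?thesis using z(3) by linarith
qed

lemma pohozaev_pos:
  assumes s: "s > 0" and pos: "W s > 0"
  shows "pohozaev s > 0"
proof -
  have lower: "- (m/2 * K * (e powr (m+1) / (m+1))) \<le> pohozaev e" if "0 < e" "e \<le> s" for e
  proof -
    have "W e * moment W e \<le> 1 * (e powr (m+1) / (m+1))"
      using W_le_1[of e] moment_W_upper[of e] moment_W_nonneg[of e] W_pos_below[OF pos, of e] that
      by (intro mult_mono) auto
    then have "m/2 * K * (W e * moment W e) \<le> m/2 * K * (e powr (m+1) / (m+1))"
      using m_pos K_pos by (intro mult_left_mono) auto
    then have "m / 2 * K * W e * moment W e \<le> m/2 * K * (e powr (m+1) / (m+1))"
      by (simp only: mult.assoc)
    moreover have "K^2 / 2 * moment W e ^ 2 * e powr (-m) \<ge> 0"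
      by simp
    moreover have "K / (p+1) * e powr (m+1) * W e powr (p+1) \<ge> 0"
      using K_pos p_gt_1 by simp
    ultimately show ?thesis
      unfolding pohozaev_def by linarith
  qed
  have "((\<lambda>e. - (m/2 * K * (e powr (m+1) / (m+1)))) \<longlongrightarrow> - (m/2 * K * (0 powr (m+1) / (m+1)))) (at_right 0)"
    using m_pos by (intro tendsto_intros tendsto_zero_powrI) (auto simp: eventually_at_filter)
  moreover have "\<forall>\<^sub>F e in at_right 0. - (m/2 * K * (e powr (m+1) / (m+1))) \<le> pohozaev (s/2)"
  proof (rule eventually_at_rightI[of 0 "s/2"])
    fix e assume "e \<in> {0<..<s/2}"
    then show "- (m/2 * K * (e powr (m+1) / (m+1))) \<le> pohozaev (s/2)"
      using lower[of e] pohozaev_strict_mono[of e "s/2"] W_pos_below[OF pos, of "s/2"] s by force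
  qed (use s in simp)
  ultimately have "0 \<le> pohozaev (s/2)"
    using m_pos by (auto intro: tendsto_upperbound)
  also have "\<dots> < pohozaev s"
    using pohozaev_strict_mono[of "s/2" s] s pos by simp
  finally show ?thesis .
qed

lemma W_powr_decay:
  assumes s: "s > 0" and pos: "W s > 0"
  shows "W s powr (p - 1) \<le> (m+1) / ((p - 1) * K) / s"
proof -
  have c: "(p - 1) * (K / (m+1)) * s > 0" using p_gt_1 K_pos m_pos s by simp
  have le: "(p - 1) * (K / (m+1)) * s \<le> W s powr (1 - p)"
    using W_decay[of s] s pos by simp
  have "0 < W s powr (1 - p) * ((p - 1) * (K / (m+1)) * s)"
    by (rule mult_pos_pos) (use c pos in simp_all)
  then have "1 / W s powr (1 - p) \<le> 1 / ((p - 1) * (K / (m+1)) * s)"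
    by (rule divide_left_mono[OF le, of 1, rotated]) simp
  moreover have "W s powr (p - 1) = 1 / W s powr (1 - p)"
    using pos by (simp add: powr_minus_divide[symmetric])
  ultimately show ?thesis by simp
qed

lemma W_sq_decay:
  assumes s: "s > 0" and pos: "W s > 0"
  shows "(W s)^2 \<le> ((m+1) / ((p - 1) * K)) powr (2 / (p - 1)) * s powr (- (2 / (p - 1)))"
proof -
  have e: "2 / (p - 1) > 0" using p_gt_1 by simp
  have "(W s)^2 = W s powr 2"
    using pos by (simp add: powr_numeral)
  also have "\<dots> = (W s powr (p - 1)) powr (2 / (p - 1))"
  proof -
    have "(p - 1) * (2 / (p - 1)) = 2" using p_gt_1 by (simp add: field_simps)
    then show ?thesis by (simp only: powr_powr)
  qed
  also have "\<dots> \<le> ((m+1) / ((p - 1) * K) / s) powr (2 / (p - 1))"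
    using W_powr_decay[OF s pos] e by (intro powr_mono2) auto
  also have "\<dots> = ((m+1) / ((p - 1) * K)) powr (2 / (p - 1)) / s powr (2 / (p - 1))"
    using s m_pos K_pos p_gt_1 by (simp add: powr_divide powr_mult)
  also have "\<dots> = ((m+1) / ((p - 1) * K)) powr (2 / (p - 1)) * s powr (- (2 / (p - 1)))"
    by (simp add: powr_minus divide_inverse)
  finally show ?thesis .
qed

lemma moment_W_mean_value:
  assumes R: "R > 0" and pos: "W (2 * R) > 0"
  obtains x where "R < x" "x < 2 * R" "K * moment W x \<le> x powr (m+1) * (W R / R)"
proof -
  obtain x where x: "R < x" "x < 2 * R" "W (2 * R) - W R = (2 * R - R) * (-K * x powr (-m-1) * moment W x)"
    using MVT2[of R "2 * R" W "\<lambda>x. -K * x powr (-m-1) * moment W x"] W_has_derivative R by force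
  have "K * moment W x = x powr (m+1) * (x powr (-m-1) * (K * moment W x))"
    using x R by (simp add: mult.assoc[symmetric] flip: powr_add)
  also have "x powr (-m-1) * (K * moment W x) = (W R - W (2 * R)) / R"
    using x(3) R by (simp add: field_simps)
  also have "\<dots> \<le> W R / R"
    using pos R by (intro divide_right_mono) auto
  finally show ?thesis
    using x R by (intro that) (auto intro: mult_left_mono)
qed

lemma pohozaev_kinetic_le:
  assumes R: "R > 0" "R < x" "x < 2 * R" and KG: "K * moment W x \<le> x powr (m+1) * (W R / R)"
  shows "K^2 / 2 * moment W x ^ 2 * x powr (-m) \<le> 2 * 2 powr m * ((W R)^2 * R powr m)"
proof -
  have "K^2 / 2 * moment W x ^ 2 * x powr (-m) = (K * moment W x)^2 * x powr (-m) / 2"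
    by (simp add: power_mult_distrib)
  also have "\<dots> \<le> (x powr (m+1) * (W R / R))^2 * x powr (-m) / 2"
    using KG K_pos moment_W_nonneg[of x] R
    by (intro divide_right_mono mult_right_mono power_mono) auto
  also have "\<dots> = x powr m * x^2 * (W R)^2 / (2 * R^2)"
    using R by (simp add: powr_add power_mult_distrib powr_minus field_simps power2_eq_square)
  also have "\<dots> \<le> (2 powr m * R powr m) * (2 * R)^2 * (W R)^2 / (2 * R^2)"
    using R m_pos
    by (intro divide_right_mono mult_right_mono mult_mono power_mono)
       (auto simp: powr_mult[symmetric] powr_mono2)
  also have "\<dots> = 2 * 2 powr m * ((W R)^2 * R powr m)"
    using R by (simp add: field_simps power2_eq_square)
  finally show ?thesis .
qed

lemma pohozaev_potential_le:
  assumes R: "R > 0" "R < x" "x < 2 * R" and pos: "W x > 0"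
  shows "K / (p+1) * x powr (m+1) * W x powr (p+1)
    \<le> 2 powr m * ((m+1) / ((p - 1) * (p + 1))) * ((W R)^2 * R powr m)"
proof -
  have "W x powr (p+1) = W x powr (p - 1) * W x powr 2"
    by (simp only: powr_add[symmetric]) (simp add: add.commute)
  also have "\<dots> = W x powr (p - 1) * (W x)^2"
    using pos by simp
  also have "\<dots> \<le> (m+1) / ((p - 1) * K) / x * (W x)^2"
    using W_powr_decay[of x] pos R by (intro mult_right_mono) auto
  finally have "K / (p+1) * x powr (m+1) * W x powr (p+1)
      \<le> K / (p+1) * x powr (m+1) * ((m+1) / ((p - 1) * K) / x * (W x)^2)"
    using K_pos p_gt_1 by (intro mult_left_mono) auto
  also have "\<dots> = (m+1) / ((p - 1) * (p + 1)) * x powr m * (W x)^2"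
  proof -
    have "K / q * (X * y) * (c / (d * K) / y * Y) = c / (d * q) * X * Y"
      if "K \<noteq> 0" "y \<noteq> 0" "q \<noteq> 0" "d \<noteq> 0" for K q X y c d Y :: real
      using that by (simp add: field_simps)
    moreover have "x powr (m+1) = x powr m * x"
      using R by (simp add: powr_add)
    ultimately show ?thesis
      using R K_pos p_gt_1 by (simp add: mult.commute[of "p - 1"])
  qed
  also have "\<dots> \<le> (m+1) / ((p - 1) * (p + 1)) * (2 powr m * R powr m) * (W R)^2"
    using pos W_antimono[of R x] R m_pos p_gt_1
    by (intro mult_left_mono mult_mono power_mono) (auto simp: powr_mult[symmetric] powr_mono2)
  finally show ?thesis
    by (simp add: mult_ac)
qed

lemma pohozaev_le:
  assumes R: "R > 0" and pos: "W (2 * R) > 0"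
  shows "\<exists>x>R. pohozaev x \<le> 2 powr m * (2 + (m+1) / ((p - 1) * (p + 1))) * ((W R)^2 * R powr m)"
proof -
  obtain x where x: "R < x" "x < 2 * R" and KG: "K * moment W x \<le> x powr (m+1) * (W R / R)"
    using moment_W_mean_value[OF R pos] .
  have "W x > 0"
    using W_pos_below[OF pos] x R by auto
  have "m / 2 * K * W x * moment W x \<ge> 0"
    using m_pos K_pos \<open>W x > 0\<close> moment_W_nonneg[of x] x R by simp
  then have "pohozaev x \<le> 2 powr m * (2 + (m+1) / ((p - 1) * (p + 1))) * ((W R)^2 * R powr m)"
    using pohozaev_kinetic_le[OF R x KG] pohozaev_potential_le[OF R x \<open>W x > 0\<close>]
    unfolding pohozaev_def by (simp add: algebra_simps)
  then show ?thesis using x by blast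
qed

lemma W_has_zero: "\<exists>s>0. W s = 0"
proof (rule ccontr)
  assume no_zero: "\<not> (\<exists>s>0. W s = 0)"
  have pos: "W s > 0" if "s \<ge> 0" for s
  proof (rule ccontr)
    assume "\<not> W s > 0"
    then have "\<exists>t\<ge>0. t \<le> s \<and> W t = 0"
      using W_0 that by (intro IVT2') (auto intro: continuous_on_subset[OF continuous_on_W])
    then obtain t where "0 \<le> t" "t \<le> s" "W t = 0" by blast
    then show False using no_zero W_0 by (cases "t = 0") auto
  qed
  define C0 where "C0 = 2 powr m * (2 + (m+1) / ((p - 1) * (p + 1)))"
  define c where "c = ((m+1) / ((p - 1) * K)) powr (2 / (p - 1))"
  have "((\<lambda>R. C0 * c * R powr (m - 2 / (p - 1))) \<longlongrightarrow> C0 * c * 0) at_top"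
    using m_mult_p_minus_1_lt_2 p_gt_1
    by (intro tendsto_mult tendsto_const tendsto_neg_powr filterlim_ident) (simp add: field_simps)
  then have "\<forall>\<^sub>F R in at_top. C0 * c * R powr (m - 2 / (p - 1)) < pohozaev 1"
    using pohozaev_pos[of 1] pos by (intro order_tendstoD) auto
  then obtain R0 where R0: "\<And>R. R \<ge> R0 \<Longrightarrow> C0 * c * R powr (m - 2 / (p - 1)) < pohozaev 1"
    by (auto simp: eventually_at_top_linorder)
  define R where "R = max R0 1"
  have R: "R \<ge> 1" "C0 * c * R powr (m - 2 / (p - 1)) < pohozaev 1"
    using R0[of R] by (auto simp: R_def)
  obtain x where x: "x > R" "pohozaev x \<le> C0 * ((W R)^2 * R powr m)"
    using pohozaev_le[of R] pos R by (auto simp: C0_def)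
  have "(W R)^2 * R powr m \<le> c * R powr (- (2 / (p - 1))) * R powr m"
    using W_sq_decay[of R] pos R by (intro mult_right_mono) (auto simp: c_def)
  also have "\<dots> = c * R powr (m - 2 / (p - 1))"
    by (simp add: mult.assoc powr_add[symmetric])
  finally have "C0 * ((W R)^2 * R powr m) \<le> C0 * (c * R powr (m - 2 / (p - 1)))"
    using m_pos p_gt_1 by (intro mult_left_mono) (auto simp: C0_def)
  then have "pohozaev x < pohozaev 1"
    using x(2) R(2) by (simp add: mult.assoc)
  moreover have "pohozaev 1 < pohozaev x"
    using pohozaev_strict_mono[of 1 x] pos x R by simp
  ultimately show False by simp
qed

lemma zero_set_radial_of_W:
  defines "Z \<equiv> {r. r > 0 \<and> radial_of W r = 0}"
  shows "Z \<noteq> {}" "bdd_above Z" "Sup Z > 0"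
proof -
  have Z_iff: "r \<in> Z \<longleftrightarrow> r > 0 \<and> W (r powr -a) = 0" for r
    by (auto simp: Z_def radial_of_def)
  obtain s0 where s0: "s0 > 0" "W s0 = 0" using W_has_zero by blast
  have "(s0 powr (-1/a)) powr -a = s0"
    using s0 a_pos by (simp add: powr_powr)
  then have r0: "s0 powr (-1/a) \<in> Z"
    using s0 by (simp add: Z_iff)
  then show "Z \<noteq> {}" by blast
  have "\<forall>\<^sub>F s in at_right 0. W s > 0"
    using continuous_on_W W_0
    by (intro order_tendstoD(1)) (auto simp: continuous_on_def simp flip: at_within_Ici_at_right)
  then obtain d where d: "d > 0" "\<And>s. 0 < s \<Longrightarrow> s < d \<Longrightarrow> W s > 0"
    by (auto simp: eventually_at_right_field)
  have "r \<le> d powr (-1/a)" if "r \<in> Z" for r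
  proof -
    have r: "r > 0" "W (r powr -a) = 0" using that by (auto simp: Z_iff)
    then have "d \<le> r powr -a" using d(2)[of "r powr -a"] by force
    then have "(r powr -a) powr (-1/a) \<le> d powr (-1/a)"
      using d a_pos by (intro powr_mono2') auto
    then show ?thesis using r a_pos by (simp add: powr_powr)
  qed
  then show bdd: "bdd_above Z" by (rule bdd_aboveI)
  have "0 < s0 powr (-1/a)" using s0 by simp
  then show "Sup Z > 0"
    using cSup_upper[OF r0 bdd] by linarith
qed

end

theorem lemma6p3:
  fixes N :: nat and \<beta> k p :: real
  assumes "N \<ge> 3" and "\<beta> > -2" and "k > 0" and "p > p_S N \<beta>"
  shows "\<exists>v. radial_sol N \<beta> k p v
            \<and> (\<forall>w. radial_sol N \<beta> k p w \<longrightarrow> (\<forall>r>0. w r = v r))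
            \<and> {r. r > 0 \<and> v r = 0} \<noteq> {}
            \<and> bdd_above {r. r > 0 \<and> v r = 0}
            \<and> Sup {r. r > 0 \<and> v r = 0} > 0"
proof -
  interpret radial_problem N \<beta> k p
    using assms by unfold_locales
  show ?thesis
    using radial_sol_radial_of[OF integral_solution_W] radial_sol_eq_radial_of_W zero_set_radial_of_W
    by blast
qed

end
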